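(* Let $n\ge 2$ and let $LS(\mathbb{R}^n)$ be the real vector space of Laplacian maps $\mathbb{R}^n\to\mathbb{R}^n$. Then there is a linear isomorphism \[ LS(\mathbb{R}^n)\simeq \bigl(C^2(\mathbb{R}^{n-1})/\mathbb{R}\bigr)\oplus\mathbb{R}, \] where $\mathbb{R}\subset C^2(\mathbb{R}^{n-1})$ denotes the subspace of constant functions.
   Context: A real $n\times n$ matrix $L=(l_{ij})$ is a Laplacian matrix if it is symmetric and $l_{ii}=-\sum_{j\neq i} l_{ij}$ for $i=1,\dots,n$. A map $f:\mathbb{R}^n\to\mathbb{R}^n$ of class $C^1$ is a Laplacian map if its Jacobian matrix $Jf(x)$ is a Laplacian matrix for every $x\in\mathbb{R}^n$. $LS(\mathbb{R}^n)$ is a vector space under pointwise operations. *)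

theory Defs
  imports "HOL-Analysis.Analysis"
begin

definition C1_map :: "(real^'a \<Rightarrow> real^'b) \<Rightarrow> bool" where
  "C1_map f \<longleftrightarrow> (\<exists>f'. (\<forall>x. (f has_derivative f' x) (at x)) \<and>
                         continuous_on UNIV (\<lambda>x. matrix (f' x)))"

definition C2_fun :: "(real^'a \<Rightarrow> real) \<Rightarrow> bool" where
  "C2_fun g \<longleftrightarrow> (\<exists>D. (\<forall>x. (g has_derivative (\<lambda>h. D x \<bullet> h)) (at x)) \<and> C1_map D)"

definition laplacian_matrix :: "real^'n^'n \<Rightarrow> bool" where
  "laplacian_matrix L \<longleftrightarrow> transpose L = L \<and>
     (\<forall>i. L $ i $ i = - (\<Sum>j\<in>UNIV - {i}. L $ i $ j))"

definition laplacian_map :: "(real^'n \<Rightarrow> real^'n) \<Rightarrow> bool" where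
  "laplacian_map f \<longleftrightarrow> (\<exists>f'. (\<forall>x. (f has_derivative f' x) (at x)) \<and>
                         continuous_on UNIV (\<lambda>x. matrix (f' x)) \<and>
                         (\<forall>x. laplacian_matrix (matrix (f' x))))"

end

theory Submission
  imports Defs
begin

text \<open>
  The Jacobian of a Laplacian map f is symmetric and kills the all-ones vector 1. Hence f is
  constant along 1 and its coordinate sum is a constant c, so f factors through the quotient map
  L of R^n onto R^n / R 1, identified with R^(n-1), as f y = L^T (h (L y)) + c e_0, where h
  again has a symmetric Jacobian and is therefore a gradient field grad g (Poincare lemma).
  Conversely, for g of class C^2 the map y |-> L^T (grad g (L y)) + c e_0 has Jacobian
  L^T (Hess g) L, which is symmetric by Schwarz's theorem and kills 1 because L does;
  and (g, c) is recovered from the map up to adding a constant to g.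
\<close>

section \<open>Symmetry of second derivatives\<close>

lemma second_difference_mean_value:
  fixes g :: "'a::real_inner \<Rightarrow> real"
  assumes dg: "\<And>x. (g has_derivative (\<lambda>h. D x \<bullet> h)) (at x)"
  obtains s where "s \<in> {0<..<1}"
    and "g (x + u + v) - g (x + v) - g (x + u) + g x = (D (x + s *\<^sub>R u + v) - D (x + s *\<^sub>R u)) \<bullet> u"
proof -
  define \<psi> where "\<psi> s = g (x + s *\<^sub>R u + v) - g (x + s *\<^sub>R u)" for s
  have "(\<psi> has_derivative (\<lambda>r. (D (x + s *\<^sub>R u + v) - D (x + s *\<^sub>R u)) \<bullet> (r *\<^sub>R u)))
          (at s within {0..1})" for s
  proof -
    have "((\<lambda>s. g (x + s *\<^sub>R u + w)) has_derivative (\<lambda>r. D (x + s *\<^sub>R u + w) \<bullet> (r *\<^sub>R u)))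
            (at s within {0..1})" for w
    proof -
      have "((\<lambda>s. x + s *\<^sub>R u + w) has_derivative (\<lambda>r. r *\<^sub>R u)) (at s within {0..1})"
        by (auto intro!: derivative_eq_intros)
      from has_derivative_compose[OF this has_derivative_subset[OF dg]] show ?thesis
        by (simp add: o_def)
    qed
    from has_derivative_diff[OF this[of v] this[of 0]] show ?thesis
      unfolding \<psi>_def by (simp add: inner_diff_left right_diff_distrib)
  qed
  from mvt_simple[of 0 1 \<psi>, OF _ this] obtain s where "s \<in> {0<..<1}"
    and "\<psi> 1 - \<psi> 0 = (D (x + s *\<^sub>R u + v) - D (x + s *\<^sub>R u)) \<bullet> u"
    by auto
  then show thesis by (intro that) (auto simp: \<psi>_def)
qed

lemma second_difference_approx:
  fixes g :: "'a::real_inner \<Rightarrow> real"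
  assumes dg: "\<And>x. (g has_derivative (\<lambda>h. D x \<bullet> h)) (at x)"
    and lin: "linear D'" and "e \<ge> 0"
    and approx: "\<And>y. norm (y - x) < d \<Longrightarrow> norm (D y - D x - D' (y - x)) \<le> e * norm (y - x)"
    and small: "norm u + norm v < d"
  shows "\<bar>g (x + u + v) - g (x + v) - g (x + u) + g x - D' v \<bullet> u\<bar> \<le> 2 * e * norm u * (norm u + norm v)"
proof -
  obtain s where s: "s \<in> {0<..<1}"
    and mvt: "g (x + u + v) - g (x + v) - g (x + u) + g x = (D (x + s *\<^sub>R u + v) - D (x + s *\<^sub>R u)) \<bullet> u"
    using second_difference_mean_value[OF dg] .
  define R where "R y = D y - D x - D' (y - x)" for y
  have R_bound: "norm (R y) \<le> e * (norm u + norm v)" if "norm (y - x) \<le> norm u + norm v" for y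
  proof -
    have "norm (R y) \<le> e * norm (y - x)" using that small approx by (simp add: R_def)
    also have "\<dots> \<le> e * (norm u + norm v)" using that \<open>e \<ge> 0\<close> by (rule mult_left_mono)
    finally show ?thesis .
  qed
  define a where "a = x + s *\<^sub>R u"
  have "norm (a + v - x) \<le> norm u + norm v" "norm (a - x) \<le> norm u + norm v"
    using s norm_triangle_ineq[of "s *\<^sub>R u" v] mult_left_le_one_le[of "norm u" s]
    by (auto simp: a_def add_increasing2)
  then have "norm (R (a + v) - R a) \<le> 2 * e * (norm u + norm v)"
    using R_bound[of "a + v"] R_bound[of a] norm_triangle_ineq4[of "R (a + v)" "R a"] by linarith
  moreover have "D (a + v) - D a = D' v + (R (a + v) - R a)"
  proof -
    have D'_v: "D' (a + v - x) - D' (a - x) = D' v"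
      using linear_diff[OF lin, of "a + v - x" "a - x"] by simp
    show ?thesis by (simp add: R_def algebra_simps flip: D'_v)
  qed
  ultimately have "\<bar>(D (a + v) - D a) \<bullet> u - D' v \<bullet> u\<bar> \<le> 2 * e * (norm u + norm v) * norm u"
    using Cauchy_Schwarz_ineq2[of "R (a + v) - R a" u]
    by (simp add: inner_add_left) (meson mult_right_mono norm_ge_zero order_trans)
  then show ?thesis using mvt by (simp add: a_def mult.commute mult.left_commute)
qed

lemma hessian_skew_part_le:
  fixes g :: "'a::real_inner \<Rightarrow> real"
  assumes dg: "\<And>x. (g has_derivative (\<lambda>h. D x \<bullet> h)) (at x)"
    and dD: "(D has_derivative D') (at x)" and "e > 0"
  shows "\<bar>D' v \<bullet> u - D' u \<bullet> v\<bar> \<le> e * (2 * (norm u + norm v)\<^sup>2)"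
proof -
  have lin: "linear D'" using dD has_derivative_linear by blast
  define N where "N = norm u + norm v"
  have "N \<ge> 0" by (simp add: N_def)
  from dD[unfolded has_derivative_at_alt] \<open>e > 0\<close> obtain d where "d > 0"
    and approx: "\<And>y. norm (y - x) < d \<Longrightarrow> norm (D y - D x - D' (y - x)) \<le> e * norm (y - x)"
    by blast
  define t where "t = d / (N + 1)"
  have "t > 0" using \<open>d > 0\<close> \<open>N \<ge> 0\<close> by (simp add: t_def)
  have "t * N < t * (N + 1)" using \<open>t > 0\<close> by simp
  also have "\<dots> = d" using \<open>N \<ge> 0\<close> by (simp add: t_def)
  finally have "t * N < d" .
  then have small: "norm (t *\<^sub>R u) + norm (t *\<^sub>R v) < d" "norm (t *\<^sub>R v) + norm (t *\<^sub>R u) < d"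
    using \<open>t > 0\<close> by (simp_all add: N_def algebra_simps)
  define \<Delta> where "\<Delta> = g (x + t *\<^sub>R u + t *\<^sub>R v) - g (x + t *\<^sub>R v) - g (x + t *\<^sub>R u) + g x"
  have "(\<Delta> - t\<^sup>2 * (D' u \<bullet> v)) - (\<Delta> - t\<^sup>2 * (D' v \<bullet> u)) = t\<^sup>2 * (D' v \<bullet> u - D' u \<bullet> v)"
    by (simp add: algebra_simps)
  then have "t\<^sup>2 * \<bar>D' v \<bullet> u - D' u \<bullet> v\<bar> = \<bar>(\<Delta> - t\<^sup>2 * (D' u \<bullet> v)) - (\<Delta> - t\<^sup>2 * (D' v \<bullet> u))\<bar>"
    by (simp add: abs_mult)
  also have "\<dots> \<le> \<bar>\<Delta> - t\<^sup>2 * (D' u \<bullet> v)\<bar> + \<bar>\<Delta> - t\<^sup>2 * (D' v \<bullet> u)\<bar>"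
    by (rule abs_triangle_ineq4)
  also have "\<dots> \<le> 2 * e * t\<^sup>2 * norm v * N + 2 * e * t\<^sup>2 * norm u * N"
  proof (rule add_mono)
    show "\<bar>\<Delta> - t\<^sup>2 * (D' u \<bullet> v)\<bar> \<le> 2 * e * t\<^sup>2 * norm v * N"
      using second_difference_approx[OF dg lin _ approx small(2)] \<open>e > 0\<close> \<open>t > 0\<close>
      by (simp add: \<Delta>_def N_def linear_scale[OF lin] power2_eq_square algebra_simps)
    show "\<bar>\<Delta> - t\<^sup>2 * (D' v \<bullet> u)\<bar> \<le> 2 * e * t\<^sup>2 * norm u * N"
      using second_difference_approx[OF dg lin _ approx small(1)] \<open>e > 0\<close> \<open>t > 0\<close>
      by (simp add: \<Delta>_def N_def linear_scale[OF lin] power2_eq_square algebra_simps)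
  qed
  also have "\<dots> = t\<^sup>2 * (e * (2 * N\<^sup>2))"
    by (simp add: N_def power2_eq_square algebra_simps)
  finally show ?thesis using \<open>t > 0\<close> by (simp add: N_def)
qed

lemma hessian_symmetric:
  fixes g :: "'a::real_inner \<Rightarrow> real"
  assumes dg: "\<And>x. (g has_derivative (\<lambda>h. D x \<bullet> h)) (at x)"
    and dD: "(D has_derivative D') (at x)"
  shows "D' u \<bullet> v = D' v \<bullet> u"
proof -
  define C where "C = 2 * (norm u + norm v)\<^sup>2"
  have "C \<ge> 0" by (simp add: C_def)
  have "\<bar>D' v \<bullet> u - D' u \<bullet> v\<bar> \<le> 0 + \<epsilon>" if "\<epsilon> > 0" for \<epsilon>
  proof -
    have "\<bar>D' v \<bullet> u - D' u \<bullet> v\<bar> \<le> \<epsilon> / (C + 1) * C"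
      unfolding C_def using \<open>\<epsilon> > 0\<close> \<open>C \<ge> 0\<close>
      by (intro hessian_skew_part_le[OF dg dD]) (simp add: C_def add_nonneg_pos)
    also have "\<dots> \<le> \<epsilon> / (C + 1) * (C + 1)"
      using \<open>\<epsilon> > 0\<close> \<open>C \<ge> 0\<close> by (intro mult_left_mono) simp_all
    also have "\<dots> = \<epsilon>" using \<open>C \<ge> 0\<close> by simp
    finally show ?thesis by simp
  qed
  then show ?thesis using field_le_epsilon[of "\<bar>D' v \<bullet> u - D' u \<bullet> v\<bar>" 0] by simp
qed

section \<open>Poincare lemma for gradient fields\<close>

lemma has_derivative_parametric_integral:
  fixes f :: "'a::euclidean_space \<Rightarrow> real \<Rightarrow> real"
  assumes deriv: "\<And>x t. ((\<lambda>x. f x t) has_derivative f' x t) (at x)"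
    and cont_f: "\<And>x. continuous_on {0..1} (f x)"
    and cont_f': "\<And>w. continuous_on UNIV (\<lambda>(x, t). f' x t w)"
  shows "((\<lambda>x. integral {0..1} (f x)) has_derivative (\<lambda>w. integral {0..1} (\<lambda>t. f' x t w))) (at x)"
proof -
  define F where "F x t = Blinfun (f' x t)" for x t
  have F_apply: "blinfun_apply (F x t) = f' x t" for x t
    unfolding F_def using deriv has_derivative_bounded_linear bounded_linear_Blinfun_apply by blast
  have cont_F: "continuous_on S (\<lambda>(x, t). F x t)" for S
    by (rule continuous_on_blinfun_componentwise)
      (use continuous_on_subset[OF cont_f'] in \<open>auto simp: F_apply split_beta\<close>)
  have "((\<lambda>x. integral (cbox 0 1) (f x)) has_derivative integral (cbox 0 1) (F x)) (at x within UNIV)"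
    by (rule leibniz_rule) (use deriv cont_f cont_F in \<open>auto simp: F_apply integrable_continuous_real\<close>)
  moreover have "F x integrable_on cbox 0 1"
    using continuous_on_compose2[OF cont_F[of UNIV] continuous_on_Pair[OF continuous_on_const continuous_on_id]]
    by (simp add: integrable_continuous_real)
  then have "blinfun_apply (integral (cbox 0 1) (F x)) = (\<lambda>w. integral {0..1} (\<lambda>t. f' x t w))"
    by (auto simp: blinfun_apply_integral F_apply cbox_interval)
  ultimately show ?thesis by (simp add: cbox_interval)
qed

lemma integral_radial_derivative:
  fixes h :: "'a::real_inner \<Rightarrow> 'a"
  assumes dh: "\<And>v. (h has_derivative h' v) (at v)"
  shows "integral {0..1} (\<lambda>t. h (t *\<^sub>R x) \<bullet> w + t * (h' (t *\<^sub>R x) x \<bullet> w)) = h x \<bullet> w"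
proof -
  have "((\<lambda>t. h (t *\<^sub>R x) \<bullet> w + t * (h' (t *\<^sub>R x) x \<bullet> w)) has_integral
          1 * (h (1 *\<^sub>R x) \<bullet> w) - 0 * (h (0 *\<^sub>R x) \<bullet> w)) {0..1}"
  proof (rule fundamental_theorem_of_calculus)
    fix t :: real
    have "((\<lambda>t. h (t *\<^sub>R x)) has_derivative (\<lambda>s. h' (t *\<^sub>R x) (s *\<^sub>R x))) (at t within {0..1})"
      using has_derivative_compose[OF has_derivative_scaleR_left[OF has_derivative_ident] dh]
      by (simp add: o_def has_derivative_at_withinI)
    from has_derivative_mult[OF has_derivative_ident has_derivative_inner_left[OF this]]
    show "((\<lambda>t. t * (h (t *\<^sub>R x) \<bullet> w)) has_vector_derivative
             (h (t *\<^sub>R x) \<bullet> w + t * (h' (t *\<^sub>R x) x \<bullet> w))) (at t within {0..1})"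
      unfolding has_vector_derivative_def
      by (rule has_derivative_eq_rhs)
        (auto simp: fun_eq_iff linear_scale[OF has_derivative_linear[OF dh]] algebra_simps)
  qed simp
  then show ?thesis by (simp add: integral_unique)
qed

lemma poincare_lemma:
  fixes h :: "'a::euclidean_space \<Rightarrow> 'a"
  assumes dh: "\<And>v. (h has_derivative h' v) (at v)"
    and cont_h': "\<And>w. continuous_on UNIV (\<lambda>v. h' v w)"
    and sym: "\<And>v u w. h' v u \<bullet> w = h' v w \<bullet> u"
  shows "\<exists>g. \<forall>v. (g has_derivative (\<lambda>w. h v \<bullet> w)) (at v)"
proof -
  have lin: "linear (h' v)" for v using dh has_derivative_linear by blast
  have cont_h: "continuous_on UNIV h"
    using dh has_derivative_continuous continuous_at_imp_continuous_on by blast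
  define g where "g x = integral {0..1} (\<lambda>t. h (t *\<^sub>R x) \<bullet> x)" for x
  have "(g has_derivative (\<lambda>w. h v \<bullet> w)) (at v)" for v
  proof -
    have "((\<lambda>x. h (t *\<^sub>R x) \<bullet> x) has_derivative (\<lambda>w. t * (h' (t *\<^sub>R x) w \<bullet> x) + h (t *\<^sub>R x) \<bullet> w)) (at x)"
      for x t
      using has_derivative_inner[OF has_derivative_compose[OF
            has_derivative_scaleR_right[OF has_derivative_ident] dh] has_derivative_ident]
      by (simp add: o_def linear_scale[OF lin] add.commute)
    then have "(g has_derivative
        (\<lambda>w. integral {0..1} (\<lambda>t. t * (h' (t *\<^sub>R v) w \<bullet> v) + h (t *\<^sub>R v) \<bullet> w))) (at v)"
      unfolding g_def
      by (rule has_derivative_parametric_integral)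
        (auto intro!: continuous_intros continuous_on_compose2[OF cont_h]
          continuous_on_compose2[OF cont_h'] simp: split_beta)
    then show ?thesis
      by (simp add: sym[of _ _ v] add.commute integral_radial_derivative[OF dh])
  qed
  then show ?thesis by blast
qed

lemma continuous_on_matrix_iff:
  fixes F :: "'x::topological_space \<Rightarrow> real^'a \<Rightarrow> real^'b"
  assumes "\<And>x. linear (F x)"
  shows "continuous_on S (\<lambda>x. matrix (F x)) \<longleftrightarrow> (\<forall>u. continuous_on S (\<lambda>x. F x u))"
proof
  assume "continuous_on S (\<lambda>x. matrix (F x))"
  then have "continuous_on S (\<lambda>x. matrix (F x) *v u)" for u
    unfolding matrix_vector_mult_def by (intro continuous_intros)
  then show "\<forall>u. continuous_on S (\<lambda>x. F x u)" by (simp add: matrix_vector_mul(2)[OF assms])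
next
  assume "\<forall>u. continuous_on S (\<lambda>x. F x u)"
  then show "continuous_on S (\<lambda>x. matrix (F x))"
    unfolding matrix_def by (intro continuous_intros) auto
qed

lemma C1_map_iff:
  "C1_map f \<longleftrightarrow>
     (\<exists>f'. (\<forall>x. (f has_derivative f' x) (at x)) \<and> (\<forall>u. continuous_on UNIV (\<lambda>x. f' x u)))"
proof -
  have "continuous_on UNIV (\<lambda>x. matrix (f' x)) \<longleftrightarrow> (\<forall>u. continuous_on UNIV (\<lambda>x. f' x u))"
    if "\<forall>x. (f has_derivative f' x) (at x)" for f'
    using that by (intro continuous_on_matrix_iff) (auto intro: has_derivative_linear)
  then show ?thesis unfolding C1_map_def by blast
qed

lemma laplacian_matrix_iff:
  fixes F :: "real^'n \<Rightarrow> real^'n"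
  assumes "linear F"
  shows "laplacian_matrix (matrix F) \<longleftrightarrow> (\<forall>u v. F u \<bullet> v = F v \<bullet> u) \<and> F (\<chi> j. 1) = 0"
proof -
  have M: "matrix F *v x = F x" for x using matrix_vector_mul(2)[OF assms] by metis
  have "transpose (matrix F) = matrix F \<longleftrightarrow> (\<forall>u v. F u \<bullet> v = F v \<bullet> u)"
  proof
    assume "transpose (matrix F) = matrix F"
    then show "\<forall>u v. F u \<bullet> v = F v \<bullet> u"
      by (metis M dot_lmul_matrix inner_commute transpose_matrix_vector)
  next
    assume "\<forall>u v. F u \<bullet> v = F v \<bullet> u"
    then have "F (axis i 1) $ j = F (axis j 1) $ i" for i j
      by (metis inner_axis inner_real_def mult.right_neutral)
    then show "transpose (matrix F) = matrix F"
      by (simp add: vec_eq_iff transpose_def matrix_def)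
  qed
  moreover have "(\<forall>i. matrix F $ i $ i = - (\<Sum>j\<in>UNIV - {i}. matrix F $ i $ j)) \<longleftrightarrow> F (\<chi> j. 1) = 0"
  proof -
    have "F (\<chi> j. 1) $ i = matrix F $ i $ i + (\<Sum>j\<in>UNIV - {i}. matrix F $ i $ j)" for i
      by (simp flip: M add: matrix_vector_mult_def sum.remove[of UNIV i])
    then show ?thesis by (auto simp: vec_eq_iff add_eq_0_iff)
  qed
  ultimately show ?thesis by (simp add: laplacian_matrix_def)
qed

lemma laplacian_map_iff:
  "laplacian_map f \<longleftrightarrow>
     (\<exists>f'. (\<forall>x. (f has_derivative f' x) (at x)) \<and> (\<forall>u. continuous_on UNIV (\<lambda>x. f' x u)) \<and>
       (\<forall>x u v. f' x u \<bullet> v = f' x v \<bullet> u) \<and> (\<forall>x. f' x (\<chi> j. 1) = 0))"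
proof -
  have "continuous_on UNIV (\<lambda>x. matrix (f' x)) \<and> (\<forall>x. laplacian_matrix (matrix (f' x))) \<longleftrightarrow>
          (\<forall>u. continuous_on UNIV (\<lambda>x. f' x u)) \<and>
          (\<forall>x u v. f' x u \<bullet> v = f' x v \<bullet> u) \<and> (\<forall>x. f' x (\<chi> j. 1) = 0)"
    if "\<forall>x. (f has_derivative f' x) (at x)" for f'
  proof -
    have lin: "linear (f' x)" for x using that has_derivative_linear by blast
    show ?thesis
      by (simp add: continuous_on_matrix_iff[OF lin] laplacian_matrix_iff[OF lin] all_conj_distrib)
  qed
  then show ?thesis unfolding laplacian_map_def by (intro ex_cong1) blast
qed

lemma laplacian_map_translation_invariant:
  assumes "laplacian_map f"
  shows "f (y + t *\<^sub>R (\<chi> j. 1)) = f y"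
proof -
  from assms obtain f' where df: "\<And>x. (f has_derivative f' x) (at x)"
    and ones: "\<And>x. f' x (\<chi> j. 1) = 0"
    unfolding laplacian_map_iff by blast
  have "((\<lambda>s. f (y + s *\<^sub>R (\<chi> j. 1))) has_derivative (\<lambda>_. 0)) (at s within UNIV)" for s
  proof -
    have "((\<lambda>s. y + s *\<^sub>R (\<chi> j. 1)) has_derivative (\<lambda>r. r *\<^sub>R (\<chi> j. 1))) (at s)"
      by (auto intro!: derivative_eq_intros)
    from has_derivative_compose[OF this df] show ?thesis
      by (simp add: o_def linear_scale[OF has_derivative_linear[OF df]] ones)
  qed
  from has_derivative_zero_constant[OF _ this] obtain k where "\<And>s. f (y + s *\<^sub>R (\<chi> j. 1)) = k"
    by auto
  from this[of t] this[of 0] show ?thesis by simp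
qed

lemma laplacian_map_sum_const:
  assumes "laplacian_map f"
  obtains c where "\<And>y. (\<Sum>i\<in>UNIV. f y $ i) = c"
proof -
  from assms obtain f' where df: "\<And>x. (f has_derivative f' x) (at x)"
    and sym: "\<And>x u v. f' x u \<bullet> v = f' x v \<bullet> u" and ones: "\<And>x. f' x (\<chi> j. 1) = 0"
    unfolding laplacian_map_iff by blast
  have "((\<lambda>y. f y \<bullet> (\<chi> j. 1)) has_derivative (\<lambda>_. 0)) (at y within UNIV)" for y
    by (rule has_derivative_eq_rhs[OF has_derivative_inner_left[OF df]])
      (simp add: fun_eq_iff sym[of _ _ "\<chi> j. 1"] ones)
  from has_derivative_zero_constant[OF _ this] obtain c where "\<And>y. f y \<bullet> (\<chi> j. 1) = c"
    by auto
  then show thesis by (intro that) (simp add: inner_vec_def)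
qed

definition gradient :: "('a::real_inner \<Rightarrow> real) \<Rightarrow> 'a \<Rightarrow> 'a" where
  "gradient g = (SOME D. \<forall>x. (g has_derivative (\<lambda>h. D x \<bullet> h)) (at x))"

lemma gradient_eqI:
  assumes "\<And>x. (g has_derivative (\<lambda>h. D x \<bullet> h)) (at x)"
  shows "gradient g = D"
proof
  fix x
  have "\<forall>x. (g has_derivative (\<lambda>h. gradient g x \<bullet> h)) (at x)"
    unfolding gradient_def by (rule someI[of _ D]) (use assms in blast)
  then have "(\<lambda>h. gradient g x \<bullet> h) = (\<lambda>h. D x \<bullet> h)"
    using assms has_derivative_unique by blast
  then show "gradient g x = D x" by (metis vector_eq_rdot)
qed

lemma C2_fun_gradient:
  assumes "C2_fun g"
  shows "(g has_derivative (\<lambda>h. gradient g x \<bullet> h)) (at x)" and "C1_map (gradient g)"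
proof -
  from assms obtain D where dg: "\<And>x. (g has_derivative (\<lambda>h. D x \<bullet> h)) (at x)" and "C1_map D"
    unfolding C2_fun_def by blast
  moreover from dg have "gradient g = D" by (rule gradient_eqI)
  ultimately show "(g has_derivative (\<lambda>h. gradient g x \<bullet> h)) (at x)" and "C1_map (gradient g)"
    by simp_all
qed

section \<open>Parametrisation of Laplacian maps by gradients\<close>

text \<open>
  The coordinate n0 plays the role of e_0 and e enumerates the remaining coordinates;
  relcoord is the quotient map L (coordinates relative to the n0-th one) and relcoord_adj
  its transpose.
\<close>

locale coordinate_split =
  fixes n0 :: "'n::finite" and e :: "'m::finite \<Rightarrow> 'n"
  assumes bij_e: "bij_betw e UNIV (UNIV - {n0})"
begin

lemma e_neq_n0 [simp]: "e k \<noteq> n0"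
  using bij_e by (auto simp: bij_betw_def)

lemma inv_e_e [simp]: "inv_into UNIV e (e k) = k"
  using bij_e by (simp add: bij_betw_def)

lemma e_inv_e [simp]: "i \<noteq> n0 \<Longrightarrow> e (inv_into UNIV e i) = i"
  using bij_e by (intro f_inv_into_f) (auto simp: bij_betw_def)

lemma sum_split: "(\<Sum>i\<in>UNIV. F i) = F n0 + (\<Sum>k\<in>UNIV. F (e k))"
  by (simp add: sum.remove[of UNIV n0] sum.reindex_bij_betw[OF bij_e])

definition relcoord :: "real^'n \<Rightarrow> real^'m" where
  "relcoord y = (\<chi> k. y $ e k - y $ n0)"

definition relcoord_adj :: "real^'m \<Rightarrow> real^'n" where
  "relcoord_adj v = (\<chi> i. if i = n0 then - (\<Sum>k\<in>UNIV. v $ k) else v $ inv_into UNIV e i)"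

definition zero_extend :: "real^'m \<Rightarrow> real^'n" where
  "zero_extend v = (\<chi> i. if i = n0 then 0 else v $ inv_into UNIV e i)"

definition proj :: "real^'n \<Rightarrow> real^'m" where
  "proj y = (\<chi> k. y $ e k)"

lemma linear_relcoord: "linear relcoord"
  by (simp add: linear_iff relcoord_def vec_eq_iff algebra_simps)

lemma linear_relcoord_adj: "linear relcoord_adj"
  by (simp add: linear_iff relcoord_adj_def vec_eq_iff algebra_simps sum.distrib sum_distrib_left)

lemma linear_zero_extend: "linear zero_extend"
  by (simp add: linear_iff zero_extend_def vec_eq_iff)

lemma linear_proj: "linear proj"
  by (simp add: linear_iff proj_def vec_eq_iff)

lemmas bounded_linear_relcoord = linear_relcoord[unfolded linear_conv_bounded_linear]
  and bounded_linear_relcoord_adj = linear_relcoord_adj[unfolded linear_conv_bounded_linear]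
  and bounded_linear_zero_extend = linear_zero_extend[unfolded linear_conv_bounded_linear]
  and bounded_linear_proj = linear_proj[unfolded linear_conv_bounded_linear]

lemma inner_relcoord_adj: "relcoord_adj v \<bullet> y = v \<bullet> relcoord y"
proof -
  have "relcoord_adj v \<bullet> y = relcoord_adj v $ n0 * y $ n0 + (\<Sum>k\<in>UNIV. relcoord_adj v $ e k * y $ e k)"
    unfolding inner_vec_def inner_real_def by (rule sum_split)
  also have "\<dots> = (\<Sum>k\<in>UNIV. v $ k * (y $ e k - y $ n0))"
    by (simp add: relcoord_adj_def sum_distrib_right right_diff_distrib sum_subtractf)
  finally show ?thesis by (simp add: inner_vec_def relcoord_def)
qed

lemma inner_zero_extend: "x \<bullet> zero_extend u = proj x \<bullet> u"
proof -
  have "x \<bullet> zero_extend u = x $ n0 * zero_extend u $ n0 + (\<Sum>k\<in>UNIV. x $ e k * zero_extend u $ e k)"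
    unfolding inner_vec_def inner_real_def by (rule sum_split)
  then show ?thesis by (simp add: inner_vec_def zero_extend_def proj_def)
qed

lemma relcoord_zero_extend [simp]: "relcoord (zero_extend v) = v"
  by (simp add: relcoord_def zero_extend_def vec_eq_iff)

lemma relcoord_ones [simp]: "relcoord (\<chi> j. 1) = 0"
  by (simp add: relcoord_def vec_eq_iff)

lemma proj_relcoord_adj [simp]: "proj (relcoord_adj v) = v"
  by (simp add: proj_def relcoord_adj_def vec_eq_iff)

lemma proj_axis_n0 [simp]: "proj (axis n0 1) = 0"
  by (simp add: proj_def vec_eq_iff axis_def)

lemma zero_extend_relcoord: "zero_extend (relcoord y) = y + (- y $ n0) *\<^sub>R (\<chi> j. 1)"
  by (simp add: zero_extend_def relcoord_def vec_eq_iff)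

lemma relcoord_adj_proj:
  assumes "(\<Sum>i\<in>UNIV. x $ i) = c"
  shows "relcoord_adj (proj x) + c *\<^sub>R axis n0 1 = x"
  using assms by (auto simp: vec_eq_iff relcoord_adj_def proj_def axis_def sum_split[of "\<lambda>i. x $ i"])

definition Phi :: "((real^'m \<Rightarrow> real) \<times> real) \<Rightarrow> real^'n \<Rightarrow> real^'n" where
  "Phi = (\<lambda>(g, c) y. relcoord_adj (gradient g (relcoord y)) + c *\<^sub>R axis n0 1)"

lemma Phi_apply: "Phi (g, c) y = relcoord_adj (gradient g (relcoord y)) + c *\<^sub>R axis n0 1"
  by (simp add: Phi_def)

lemma laplacian_map_Phi:
  assumes "C2_fun g"
  shows "laplacian_map (Phi (g, c))"
proof -
  from C2_fun_gradient(2)[OF assms] obtain D' where dD: "\<And>x. (gradient g has_derivative D' x) (at x)"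
    and cont_D': "\<And>u. continuous_on UNIV (\<lambda>x. D' x u)"
    unfolding C1_map_iff by blast
  define F where "F y = (\<lambda>u. relcoord_adj (D' (relcoord y) (relcoord u)))" for y
  have "(Phi (g, c) has_derivative F y) (at y)" for y
  proof -
    have "((\<lambda>y. gradient g (relcoord y)) has_derivative (\<lambda>u. D' (relcoord y) (relcoord u))) (at y)"
      using has_derivative_compose[OF bounded_linear_imp_has_derivative[OF bounded_linear_relcoord] dD]
      by (simp add: o_def)
    from has_derivative_add_const[OF bounded_linear.has_derivative[OF bounded_linear_relcoord_adj this],
        where c = "c *\<^sub>R axis n0 1"]
    show ?thesis by (simp add: Phi_apply[abs_def] F_def)
  qed
  moreover have "continuous_on UNIV (\<lambda>y. F y u)" for u
    unfolding F_def
    by (intro continuous_on_compose2[OF linear_continuous_on[OF bounded_linear_relcoord_adj]]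
        continuous_on_compose2[OF cont_D'] linear_continuous_on bounded_linear_relcoord) auto
  moreover have "F y u \<bullet> v = F y v \<bullet> u" for y u v
    unfolding F_def inner_relcoord_adj
    by (rule hessian_symmetric[OF C2_fun_gradient(1)[OF assms] dD])
  moreover have "F y (\<chi> j. 1) = 0" for y
    using linear_0[OF has_derivative_linear[OF dD]] linear_0[OF linear_relcoord_adj]
    by (simp add: F_def)
  ultimately show ?thesis unfolding laplacian_map_iff by blast
qed

lemma Phi_add:
  assumes "C2_fun g1" "C2_fun g2"
  shows "Phi (\<lambda>x. g1 x + g2 x, c1 + c2) = (\<lambda>y. Phi (g1, c1) y + Phi (g2, c2) y)"
proof -
  have "gradient (\<lambda>x. g1 x + g2 x) = (\<lambda>x. gradient g1 x + gradient g2 x)"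
    by (rule gradient_eqI)
      (use has_derivative_add[OF C2_fun_gradient(1)[OF assms(1)] C2_fun_gradient(1)[OF assms(2)]]
        in \<open>simp add: inner_add_left\<close>)
  then show ?thesis
    by (simp add: fun_eq_iff Phi_apply linear_add[OF linear_relcoord_adj] scaleR_add_left algebra_simps)
qed

lemma Phi_scale:
  assumes "C2_fun g"
  shows "Phi (\<lambda>x. a * g x, a * c) = (\<lambda>y. a *\<^sub>R Phi (g, c) y)"
proof -
  have "gradient (\<lambda>x. a * g x) = (\<lambda>x. a *\<^sub>R gradient g x)"
    by (rule gradient_eqI) (use has_derivative_mult_right[OF C2_fun_gradient(1)[OF assms]] in simp)
  then show ?thesis
    by (simp add: fun_eq_iff Phi_apply linear_scale[OF linear_relcoord_adj] scaleR_add_right)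
qed

lemma Phi_eq_0_iff:
  assumes "C2_fun g"
  shows "Phi (g, c) = (\<lambda>y. 0) \<longleftrightarrow> (\<exists>k. \<forall>x. g x = k) \<and> c = 0"
proof
  assume Phi_0: "Phi (g, c) = (\<lambda>y. 0)"
  have "gradient g x = 0" for x
    using arg_cong[OF fun_cong[OF Phi_0, of "zero_extend x"], of proj]
    by (simp add: Phi_apply linear_add[OF linear_proj] linear_scale[OF linear_proj] linear_0[OF linear_proj])
  moreover from this have "c *\<^sub>R axis n0 (1::real) = 0"
    using fun_cong[OF Phi_0, of 0] by (simp add: Phi_apply linear_0[OF linear_relcoord_adj])
  moreover have "\<exists>k. \<forall>x\<in>UNIV. g x = k"
    by (rule has_derivative_zero_constant) (use C2_fun_gradient(1)[OF assms] calculation(1) in auto)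
  ultimately show "(\<exists>k. \<forall>x. g x = k) \<and> c = 0" by (auto simp: axis_eq_0_iff)
next
  assume "(\<exists>k. \<forall>x. g x = k) \<and> c = 0"
  then obtain k where g: "g = (\<lambda>x. k)" and "c = 0" by auto
  have gradient_const: "gradient (\<lambda>x. k) = (\<lambda>x. 0)"
    by (rule gradient_eqI) simp
  show "Phi (g, c) = (\<lambda>y. 0)"
    unfolding g \<open>c = 0\<close>
    by (simp add: fun_eq_iff Phi_apply gradient_const linear_0[OF linear_relcoord_adj])
qed

lemma laplacian_map_eq_Phi:
  assumes "laplacian_map f"
  obtains g c where "C2_fun g" and "Phi (g, c) = f"
proof -
  from assms obtain f' where df: "\<And>x. (f has_derivative f' x) (at x)"
    and cont_f': "\<And>u. continuous_on UNIV (\<lambda>x. f' x u)"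
    and sym: "\<And>x u v. f' x u \<bullet> v = f' x v \<bullet> u"
    unfolding laplacian_map_iff by blast
  obtain c where sum_f: "\<And>y. (\<Sum>i\<in>UNIV. f y $ i) = c"
    using laplacian_map_sum_const[OF assms] by blast
  define h where "h v = proj (f (zero_extend v))" for v
  define h' where "h' v = (\<lambda>w. proj (f' (zero_extend v) (zero_extend w)))" for v
  have dh: "(h has_derivative h' v) (at v)" for v
    using has_derivative_compose[OF bounded_linear_imp_has_derivative[OF bounded_linear_zero_extend] df]
    unfolding h_def h'_def by (auto simp: o_def intro: bounded_linear.has_derivative[OF bounded_linear_proj])
  have cont_h': "continuous_on UNIV (\<lambda>v. h' v w)" for w
    unfolding h'_def
    by (intro continuous_on_compose2[OF linear_continuous_on[OF bounded_linear_proj]]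
        continuous_on_compose2[OF cont_f'] linear_continuous_on bounded_linear_zero_extend) auto
  have "h' v u \<bullet> w = h' v w \<bullet> u" for v u w
    unfolding h'_def inner_zero_extend[symmetric] by (rule sym)
  from poincare_lemma[OF dh cont_h' this] obtain g where dg: "\<And>v. (g has_derivative (\<lambda>w. h v \<bullet> w)) (at v)"
    by blast
  have "C2_fun g"
    unfolding C2_fun_def C1_map_iff using dg dh cont_h' by blast
  moreover have "Phi (g, c) = f"
  proof
    fix y
    have "f (zero_extend (relcoord y)) = f y"
      unfolding zero_extend_relcoord by (rule laplacian_map_translation_invariant[OF assms])
    then show "Phi (g, c) y = f y"
      by (simp add: Phi_apply gradient_eqI[OF dg] h_def relcoord_adj_proj[OF sum_f])
  qed
  ultimately show thesis by (rule that)
qed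

end

theorem corollary4p1:
  assumes "CARD('n::finite) = CARD('m::finite) + 1"
  shows "\<exists>\<Phi> :: ((real^'m \<Rightarrow> real) \<times> real) \<Rightarrow> (real^'n \<Rightarrow> real^'n).
     (\<forall>g c. C2_fun g \<longrightarrow> laplacian_map (\<Phi> (g, c))) \<and>
     (\<forall>g1 g2 c1 c2. C2_fun g1 \<longrightarrow> C2_fun g2 \<longrightarrow>
        \<Phi> (\<lambda>x. g1 x + g2 x, c1 + c2) = (\<lambda>y. \<Phi> (g1, c1) y + \<Phi> (g2, c2) y)) \<and>
     (\<forall>a g c. C2_fun g \<longrightarrow> \<Phi> (\<lambda>x. a * g x, a * c) = (\<lambda>y. a *\<^sub>R \<Phi> (g, c) y)) \<and>
     (\<forall>f. laplacian_map f \<longrightarrow> (\<exists>g c. C2_fun g \<and> \<Phi> (g, c) = f)) \<and>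
     (\<forall>g c. C2_fun g \<longrightarrow> (\<Phi> (g, c) = (\<lambda>y. 0) \<longleftrightarrow> (\<exists>k. \<forall>x. g x = k) \<and> c = 0))"
proof -
  obtain n0 :: 'n where True by blast
  have "card (UNIV - {n0}) = CARD('m)" using assms by (simp add: card_Diff_singleton)
  then obtain e :: "'m \<Rightarrow> 'n" where "bij_betw e UNIV (UNIV - {n0})"
    using finite_same_card_bij[of "UNIV :: 'm set" "UNIV - {n0}"] by auto
  then interpret coordinate_split n0 e by unfold_locales
  show ?thesis
  proof (intro exI[of _ Phi] conjI allI impI)
    fix f :: "real^'n \<Rightarrow> real^'n"
    assume "laplacian_map f"
    then show "\<exists>g c. C2_fun g \<and> Phi (g, c) = f" by (metis laplacian_map_eq_Phi)
  qed (simp_all add: laplacian_map_Phi Phi_add Phi_scale Phi_eq_0_iff)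
qed

end
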